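(* Let $f(y_1,y_2,y_3)$ be any real ternary cubic form. Let $G$ be the $3\times3$ matrix with entries $$G_{ij}=\frac{\partial f}{\partial y_i}\frac{\partial f}{\partial y_j}-f\,\frac{\partial^2 f}{\partial y_i\partial y_j}$$ (which equals $-f^2\partial^2(\log f)/\partial y_i\partial y_j$ where $f\neq0$). Let $H=\det(\partial^2 f/\partial y_i\partial y_j)$ be the Hessian determinant of $f$. Then, as an identity of polynomials in $y$, $$\det G=\tfrac12 f^3H.$$ *)

theory Defs
  imports "HOL-Analysis.Analysis"
begin

definition cubic_form :: "(nat \<Rightarrow> nat \<Rightarrow> nat \<Rightarrow> real) \<Rightarrow> real^3 \<Rightarrow> real" where
  "cubic_form c y =
     (\<Sum>(a, b, d) \<in> {(a, b, d). a + b + d = (3::nat)}.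
        c a b d * (y $ 1) ^ a * (y $ 2) ^ b * (y $ 3) ^ d)"

definition partial :: "3 \<Rightarrow> (real^3 \<Rightarrow> real) \<Rightarrow> real^3 \<Rightarrow> real" where
  "partial i g y = deriv (\<lambda>t. g (y + t *\<^sub>R axis i 1)) 0"

definition hessian_matrix :: "(real^3 \<Rightarrow> real) \<Rightarrow> real^3 \<Rightarrow> real^3^3" where
  "hessian_matrix g y = (\<chi> i j. partial i (partial j g) y)"

end

theory Submission
  imports Defs
begin

(* Write g = grad f(y), H = Hess f(y) and F = f(y), so that G = g g^T - F H.
   Since f is homogeneous of degree 3 and each partial derivative of f is homogeneous of
   degree 2, Euler's identity gives the two relations
       y . g = 3 F        and        y^T H = 2 g^T.
   The theorem is then pure 3x3 linear algebra: expanding the determinant of a rank-one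
   perturbation gives  det (g g^T - F H) = F^2 g^T adj(H) g - F^3 det H,  and the two
   Euler relations turn the quadratic form into  2 g^T adj(H) g = y^T H adj(H) g
   = det H (y . g) = 3 F det H. *)

text \<open>The adjugate (transposed cofactor matrix) of a 3x3 matrix; the cofactors are written
  with cyclic index arithmetic in the index type 3.\<close>
definition adjugate3 :: "real^3^3 \<Rightarrow> real^3^3" where
  "adjugate3 A = (\<chi> i j. A$(j+1)$(i+1) * A$(j+2)$(i+2) - A$(j+1)$(i+2) * A$(j+2)$(i+1))"

text \<open>Cyclic index arithmetic in the index type 3 produces the numerals 4 and 5.\<close>
lemma numeral_wrap_3: "(4::3) = 1" "(5::3) = 2"
  by simp_all

lemma matrix_mul_adjugate3: "A ** adjugate3 A = det A *\<^sub>R mat 1"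
  by (simp add: vec_eq_iff matrix_matrix_mult_def adjugate3_def det_3 sum_3 mat_def
      forall_3 numeral_wrap_3 algebra_simps)

lemma det_rank_one_update3:
  "det (\<chi> i j. g$i * g$j - F * A$i$j) = F^2 * (g \<bullet> (adjugate3 A *v g)) - F^3 * det A"
  by (simp add: adjugate3_def det_3 inner_vec_def matrix_vector_mult_def sum_3 numeral_wrap_3
      algebra_simps power2_eq_square power3_eq_cube)

lemma det_rank_one_update_Euler:
  fixes A :: "real^3^3" and g y :: "real^3" and F k :: real
  assumes row: "y v* A = k *\<^sub>R g" and dot: "y \<bullet> g = (k + 1) * F"
  shows "k * det (\<chi> i j. g$i * g$j - F * A$i$j) = F^3 * det A"
proof -
  have "k * (g \<bullet> (adjugate3 A *v g)) = (y v* A) \<bullet> (adjugate3 A *v g)"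
    by (simp add: row)
  also have "\<dots> = y \<bullet> ((A ** adjugate3 A) *v g)"
    by (simp add: dot_lmul_matrix matrix_vector_mul_assoc)
  also have "\<dots> = det A * (y \<bullet> g)"
    by (simp add: matrix_mul_adjugate3 flip: scaleR_matrix_vector_assoc)
  finally have quadratic: "k * (g \<bullet> (adjugate3 A *v g)) = (k + 1) * F * det A"
    by (simp add: dot)
  show ?thesis
    unfolding det_rank_one_update3
    by (simp add: right_diff_distrib quadratic power2_eq_square power3_eq_cube algebra_simps)
qed

definition monomial :: "('n::finite \<Rightarrow> nat) \<Rightarrow> real^'n \<Rightarrow> real" where
  "monomial e z = (\<Prod>k\<in>UNIV. z$k ^ e k)"

lemma monomial_split: "monomial e z = z$i ^ e i * (\<Prod>k\<in>UNIV-{i}. z$k ^ e k)"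
  unfolding monomial_def by (simp add: prod.remove)

lemma prod_other_coords_update:
  "(\<Prod>k\<in>UNIV-{i}. z$k ^ (e(i := m)) k) = (\<Prod>k\<in>UNIV-{i}. z$k ^ e k)"
  by (rule prod.cong) auto

lemma monomial_axis_derivative:
  "((\<lambda>t. monomial e (y + t *\<^sub>R axis i 1)) has_field_derivative
      of_nat (e i) * monomial (e(i := e i - 1)) y) (at 0)"
proof -
  have others: "(\<Prod>k\<in>UNIV-{i}. (y + t *\<^sub>R axis i 1)$k ^ e k) = (\<Prod>k\<in>UNIV-{i}. y$k ^ e k)"
    for t by (rule prod.cong) (auto simp: axis_def)
  have "(\<lambda>t. monomial e (y + t *\<^sub>R axis i 1)) = (\<lambda>t. (y$i + t) ^ e i * (\<Prod>k\<in>UNIV-{i}. y$k ^ e k))"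
    by (rule ext) (simp add: monomial_split[of _ _ i] others axis_def)
  then show ?thesis
    by (simp add: monomial_split[of _ _ i] prod_other_coords_update)
      (auto intro!: derivative_eq_intros)
qed

lemma monomial_Euler: "z$i * (of_nat (e i) * monomial (e(i := e i - 1)) z) = of_nat (e i) * monomial e z"
proof (cases "e i = 0")
  case False
  then have "z$i ^ e i = z$i * z$i ^ (e i - 1)"
    by (metis Suc_pred' neq0_conv power_Suc)
  then show ?thesis
    by (simp add: monomial_split[of _ _ i] prod_other_coords_update)
qed simp

definition monomial_sum :: "'a set \<Rightarrow> ('a \<Rightarrow> real) \<Rightarrow> ('a \<Rightarrow> 'n::finite \<Rightarrow> nat) \<Rightarrow> real^'n \<Rightarrow> real" where
  "monomial_sum T w e z = (\<Sum>x\<in>T. w x * monomial (e x) z)"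

definition homogeneous_sum :: "nat \<Rightarrow> 'a set \<Rightarrow> ('a \<Rightarrow> real) \<Rightarrow> ('a \<Rightarrow> 'n::finite \<Rightarrow> nat) \<Rightarrow> bool" where
  "homogeneous_sum d T w e \<longleftrightarrow> finite T \<and> (\<forall>x\<in>T. w x \<noteq> 0 \<longrightarrow> sum (e x) UNIV = d)"

lemma partial_monomial_sum:
  assumes "finite T"
  shows "partial i (monomial_sum T w e) =
           monomial_sum T (\<lambda>x. w x * of_nat (e x i)) (\<lambda>x. (e x)(i := e x i - 1))"
proof
  fix y
  have "((\<lambda>t. monomial_sum T w e (y + t *\<^sub>R axis i 1)) has_field_derivative
      (\<Sum>x\<in>T. w x * (of_nat (e x i) * monomial ((e x)(i := e x i - 1)) y))) (at 0)"
    unfolding monomial_sum_def by (intro DERIV_sum DERIV_cmult monomial_axis_derivative)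
  then show "partial i (monomial_sum T w e) y =
      monomial_sum T (\<lambda>x. w x * of_nat (e x i)) (\<lambda>x. (e x)(i := e x i - 1)) y"
    unfolding partial_def monomial_sum_def by (simp add: DERIV_imp_deriv mult.assoc)
qed

lemma homogeneous_sum_partial:
  assumes "homogeneous_sum d T w e"
  shows "homogeneous_sum (d - 1) T (\<lambda>x. w x * of_nat (e x i)) (\<lambda>x. (e x)(i := e x i - 1))"
  unfolding homogeneous_sum_def
proof safe
  show "finite T" using assms by (simp add: homogeneous_sum_def)
next
  fix x assume x: "x \<in> T" and nonzero: "w x * of_nat (e x i) \<noteq> 0"
  then have "sum (e x) UNIV = d" and pos: "e x i > 0"
    using assms by (auto simp: homogeneous_sum_def)
  moreover have "sum ((e x)(i := e x i - 1)) (UNIV - {i}) = sum (e x) (UNIV - {i})"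
    by (rule sum.cong) auto
  then have "sum ((e x)(i := e x i - 1)) UNIV = e x i - 1 + sum (e x) (UNIV - {i})"
    by (subst sum.remove[of UNIV i]) simp_all
  moreover have "sum (e x) UNIV = e x i + sum (e x) (UNIV - {i})"
    by (subst sum.remove[of UNIV i]) simp_all
  ultimately show "sum ((e x)(i := e x i - 1)) UNIV = d - 1"
    by linarith
qed

lemma homogeneous_sum_Euler:
  assumes hom: "homogeneous_sum d T w e"
  shows "(\<Sum>i\<in>UNIV. z$i * partial i (monomial_sum T w e) z) = of_nat d * monomial_sum T w e z"
proof -
  have fin: "finite T" using hom by (simp add: homogeneous_sum_def)
  have "(\<Sum>i\<in>UNIV. z$i * partial i (monomial_sum T w e) z)
      = (\<Sum>i\<in>UNIV. \<Sum>x\<in>T. w x * (z$i * (of_nat (e x i) * monomial ((e x)(i := e x i - 1)) z)))"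
    by (simp add: partial_monomial_sum[OF fin] monomial_sum_def sum_distrib_left mult_ac)
  also have "\<dots> = (\<Sum>i\<in>UNIV. \<Sum>x\<in>T. w x * (of_nat (e x i) * monomial (e x) z))"
    by (simp only: monomial_Euler)
  also have "\<dots> = (\<Sum>x\<in>T. w x * of_nat (sum (e x) UNIV) * monomial (e x) z)"
    by (subst sum.swap) (simp add: sum_distrib_left sum_distrib_right mult_ac)
  also have "\<dots> = (\<Sum>x\<in>T. of_nat d * (w x * monomial (e x) z))"
    using hom by (intro sum.cong) (auto simp: homogeneous_sum_def)
  finally show ?thesis
    by (simp add: monomial_sum_def sum_distrib_left)
qed

definition exponent3 :: "nat \<times> nat \<times> nat \<Rightarrow> 3 \<Rightarrow> nat" where
  "exponent3 = (\<lambda>(a, b, d) k. if k = 1 then a else if k = 2 then b else d)"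

lemma exponent3_simps [simp]:
  "exponent3 (a, b, d) 1 = a" "exponent3 (a, b, d) 2 = b" "exponent3 (a, b, d) 3 = d"
  by (auto simp: exponent3_def)

lemma monomial_exponent3: "monomial (exponent3 (a, b, d)) y = (y$1) ^ a * (y$2) ^ b * (y$3) ^ d"
  unfolding monomial_def UNIV_3 by simp

lemma finite_cubic_exponents: "finite {(a, b, d). a + b + d = (3::nat)}"
proof -
  have "{(a, b, d). a + b + d = (3::nat)} \<subseteq> {..3} \<times> {..3} \<times> {..3}"
    by auto
  then show ?thesis
    by (rule finite_subset) auto
qed

lemma cubic_form_homogeneous:
  obtains T :: "(nat \<times> nat \<times> nat) set" and w e
  where "homogeneous_sum 3 T w e" and "cubic_form c = monomial_sum T w e"
proof
  let ?T = "{(a, b, d). a + b + d = (3::nat)}"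
  show "homogeneous_sum 3 ?T (\<lambda>(a, b, d). c a b d) exponent3"
    using finite_cubic_exponents by (auto simp: homogeneous_sum_def sum_3)
  show "cubic_form c = monomial_sum ?T (\<lambda>(a, b, d). c a b d) exponent3"
    unfolding cubic_form_def monomial_sum_def
    by (rule ext, rule sum.cong) (auto simp: monomial_exponent3)
qed

theorem lemma3p5:
  fixes c :: "nat \<Rightarrow> nat \<Rightarrow> nat \<Rightarrow> real" and y :: "real^3"
  defines "f \<equiv> cubic_form c"
  defines "G \<equiv> (\<chi> i j. partial i f y * partial j f y - f y * partial i (partial j f) y) :: real^3^3"
  shows "det G = 1/2 * (f y) ^ 3 * det (hessian_matrix f y)"
proof -
  obtain T :: "(nat \<times> nat \<times> nat) set" and w e
    where hom: "homogeneous_sum 3 T w e" and f_eq: "f = monomial_sum T w e"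
    unfolding f_def by (rule cubic_form_homogeneous)
  have fin: "finite T" using hom by (simp add: homogeneous_sum_def)
  define g where "g = (\<chi> j. partial j f y)"
  define H where "H = hessian_matrix f y"
  (* Euler's identity for f, with the degree 3 written as k + 1 for k = 2 *)
  have Euler_f: "y \<bullet> g = (2 + 1) * f y"
    using homogeneous_sum_Euler[OF hom, of y] by (simp add: f_eq g_def inner_vec_def mult_ac)
  have Euler_grad: "y v* H = 2 *\<^sub>R g"
  proof (subst vec_eq_iff, intro allI)
    fix j
    have "homogeneous_sum 2 T (\<lambda>x. w x * of_nat (e x j)) (\<lambda>x. (e x)(j := e x j - 1))"
      using homogeneous_sum_partial[OF hom] by simp
    from homogeneous_sum_Euler[OF this, of y]
    show "(y v* H) $ j = (2 *\<^sub>R g) $ j"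
      by (simp add: H_def g_def hessian_matrix_def vector_matrix_mult_def f_eq
          partial_monomial_sum[OF fin] mult_ac)
  qed
  have "G = (\<chi> i j. g$i * g$j - f y * H$i$j)"
    by (simp add: G_def g_def H_def hessian_matrix_def)
  then have "2 * det G = (f y) ^ 3 * det H"
    using det_rank_one_update_Euler[OF Euler_grad Euler_f] by simp
  then show ?thesis
    by (simp add: H_def)
qed

end
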